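(* Let $A$ and $B$ be dendroidally ordered sets, let $y$ be a leaf of $A$, and form the grafting $A\circ B$, i.e. the pushout in $\mathbf{bPos}$ of $A\leftarrow\star\rightarrow B$ where $\star\to A$ picks $y$ and $\star\to B$ picks the root of $B$. Then $A\circ B$ is again a dendroidally ordered set, and it is also a pushout of the same diagram in the full subcategory $\Omega\subseteq\mathbf{bPos}$ of dendroidally ordered sets.
   Context: $A^*$ denotes the free monoid (non-commutative setting) or free commutative monoid (commutative setting) on $A$. A broad poset: $R\subseteq A^*\times A$ (written $\le$) with reflexivity, transitivity (if $a_1\cdots a_n\le a$ and $b_i\le a_i$, $b_i\in A^*$, then $b_1\cdots b_n\le a$), antisymmetry on $A$; monotone maps: $b\le a\Rightarrow f(b)\le f(a)$. $\star$ is the singleton broad poset with only the relation $*\le *$; monotone maps $\star\to A$ correspond to elements of $A$. Extended order on $A^*$: $a\le b$ iff $b=b_1\cdots b_n$ ($b_i\in A$), $a=a_1\cdots a_n$ with $a_i\le b_i$. Descendant: $b\le_d a$ iff some $b'\in A^*$ with $b'\le a$ contains $b$. $\hat a=\{b\in A^*:b<a\}$; $a$ is a leaf if $\hat a=\emptyset$; $a$ has children if $\hat a$ has a maximum $a^\uparrow$ (elements of $a^\uparrow$ are children). A dendroidally ordered set is a broad poset with finitely many relations that is simple ($a_1\cdots a_n\le a$ implies the $a_i$ are pairwise distinct), has a root (an element of which every element is a descendant), and in which every non-leaf has children. $\Omega$ is the full subcategory of $\mathbf{bPos}$ on dendroidally ordered sets. Explicitly, assuming $A\cap B=\{y\}$,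 $A\circ B$ is the set $A\cup B$ where $z\le x$ iff it holds in $A$ or in $B$, or $z=a_1ba_2$ with $a_1,a_2\in A^*$, $b\in B^*$, $b\le y$ in $B$ and $a_1ya_2\le x$ in $A$. *)

theory Defs
  imports Main "HOL-Library.Multiset"
begin

section \<open>Non-commutative (planar) setting: A* = lists over A\<close>

text \<open>A broad poset is a carrier S together with a relation R between words (lists)
  over S and elements of S; (bs, a) in R means bs \<le> a.\<close>

definition bposet_nc :: "'a set \<Rightarrow> ('a list \<times> 'a) set \<Rightarrow> bool" where
  "bposet_nc S R \<longleftrightarrow>
     R \<subseteq> lists S \<times> S
   \<and> (\<forall>a\<in>S. ([a], a) \<in> R)
   \<and> (\<forall>as a bss. (as, a) \<in> R \<and> length bss = length as
        \<and> (\<forall>i<length as. (bss ! i, as ! i) \<in> R) \<longrightarrow> (concat bss, a) \<in> R)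
   \<and> (\<forall>a b. ([a], b) \<in> R \<and> ([b], a) \<in> R \<longrightarrow> a = b)"

definition mono_nc :: "'a set \<Rightarrow> ('a list \<times> 'a) set \<Rightarrow> 'b set \<Rightarrow> ('b list \<times> 'b) set
    \<Rightarrow> ('a \<Rightarrow> 'b) \<Rightarrow> bool" where
  "mono_nc S R S' R' f \<longleftrightarrow>
     (\<forall>a\<in>S. f a \<in> S') \<and> (\<forall>bs a. (bs, a) \<in> R \<longrightarrow> (map f bs, f a) \<in> R')"

definition ext_le_nc :: "('a list \<times> 'a) set \<Rightarrow> 'a list \<Rightarrow> 'a list \<Rightarrow> bool" where
  "ext_le_nc R as bs \<longleftrightarrow>
     (\<exists>ass. length ass = length bs \<and> as = concat ass
        \<and> (\<forall>i<length bs. (ass ! i, bs ! i) \<in> R))"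

definition hat_nc :: "('a list \<times> 'a) set \<Rightarrow> 'a \<Rightarrow> 'a list set" where
  "hat_nc R a = {b. (b, a) \<in> R \<and> b \<noteq> [a]}"

definition leaf_nc :: "('a list \<times> 'a) set \<Rightarrow> 'a \<Rightarrow> bool" where
  "leaf_nc R a \<longleftrightarrow> hat_nc R a = {}"

definition has_children_nc :: "('a list \<times> 'a) set \<Rightarrow> 'a \<Rightarrow> bool" where
  "has_children_nc R a \<longleftrightarrow>
     (\<exists>m\<in>hat_nc R a. \<forall>b\<in>hat_nc R a. ext_le_nc R b m)"

definition descendant_nc :: "('a list \<times> 'a) set \<Rightarrow> 'a \<Rightarrow> 'a \<Rightarrow> bool" where
  "descendant_nc R b a \<longleftrightarrow> (\<exists>b'. (b', a) \<in> R \<and> b \<in> set b')"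

definition is_root_nc :: "'a set \<Rightarrow> ('a list \<times> 'a) set \<Rightarrow> 'a \<Rightarrow> bool" where
  "is_root_nc S R r \<longleftrightarrow> r \<in> S \<and> (\<forall>a\<in>S. descendant_nc R a r)"

definition simple_nc :: "('a list \<times> 'a) set \<Rightarrow> bool" where
  "simple_nc R \<longleftrightarrow> (\<forall>as a. (as, a) \<in> R \<longrightarrow> distinct as)"

definition dendroidal_nc :: "'a set \<Rightarrow> ('a list \<times> 'a) set \<Rightarrow> bool" where
  "dendroidal_nc S R \<longleftrightarrow>
     bposet_nc S R \<and> finite R \<and> simple_nc R \<and> (\<exists>r. is_root_nc S R r)
   \<and> (\<forall>a\<in>S. \<not> leaf_nc R a \<longrightarrow> has_children_nc R a)"

text \<open>Grafting A \<circ> B along y (assuming A \<inter> B = {y}); carrier is A \<union> B.\<close>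
definition graft_nc :: "('a list \<times> 'a) set \<Rightarrow> ('a list \<times> 'a) set \<Rightarrow> 'a
    \<Rightarrow> ('a list \<times> 'a) set" where
  "graft_nc RA RB y = RA \<union> RB \<union>
     {(a1 @ b @ a2, x) | a1 b a2 x. (b, y) \<in> RB \<and> (a1 @ [y] @ a2, x) \<in> RA}"

section \<open>Commutative setting: A* = finite multisets over A\<close>

definition bposet_c :: "'a set \<Rightarrow> ('a multiset \<times> 'a) set \<Rightarrow> bool" where
  "bposet_c S R \<longleftrightarrow>
     (\<forall>m a. (m, a) \<in> R \<longrightarrow> set_mset m \<subseteq> S \<and> a \<in> S)
   \<and> (\<forall>a\<in>S. ({#a#}, a) \<in> R)
   \<and> (\<forall>as a bss. (mset as, a) \<in> R \<and> length bss = length as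
        \<and> (\<forall>i<length as. (bss ! i, as ! i) \<in> R) \<longrightarrow> (sum_list bss, a) \<in> R)
   \<and> (\<forall>a b. ({#a#}, b) \<in> R \<and> ({#b#}, a) \<in> R \<longrightarrow> a = b)"

definition mono_c :: "'a set \<Rightarrow> ('a multiset \<times> 'a) set \<Rightarrow> 'b set \<Rightarrow> ('b multiset \<times> 'b) set
    \<Rightarrow> ('a \<Rightarrow> 'b) \<Rightarrow> bool" where
  "mono_c S R S' R' f \<longleftrightarrow>
     (\<forall>a\<in>S. f a \<in> S') \<and> (\<forall>m a. (m, a) \<in> R \<longrightarrow> (image_mset f m, f a) \<in> R')"

definition ext_le_c :: "('a multiset \<times> 'a) set \<Rightarrow> 'a multiset \<Rightarrow> 'a multiset \<Rightarrow> bool" where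
  "ext_le_c R m n \<longleftrightarrow>
     (\<exists>bs ms. mset bs = n \<and> length ms = length bs \<and> m = sum_list ms
        \<and> (\<forall>i<length bs. (ms ! i, bs ! i) \<in> R))"

definition hat_c :: "('a multiset \<times> 'a) set \<Rightarrow> 'a \<Rightarrow> 'a multiset set" where
  "hat_c R a = {b. (b, a) \<in> R \<and> b \<noteq> {#a#}}"

definition leaf_c :: "('a multiset \<times> 'a) set \<Rightarrow> 'a \<Rightarrow> bool" where
  "leaf_c R a \<longleftrightarrow> hat_c R a = {}"

definition has_children_c :: "('a multiset \<times> 'a) set \<Rightarrow> 'a \<Rightarrow> bool" where
  "has_children_c R a \<longleftrightarrow>
     (\<exists>m\<in>hat_c R a. \<forall>b\<in>hat_c R a. ext_le_c R b m)"

definition descendant_c :: "('a multiset \<times> 'a) set \<Rightarrow> 'a \<Rightarrow> 'a \<Rightarrow> bool" where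
  "descendant_c R b a \<longleftrightarrow> (\<exists>b'. (b', a) \<in> R \<and> b \<in># b')"

definition is_root_c :: "'a set \<Rightarrow> ('a multiset \<times> 'a) set \<Rightarrow> 'a \<Rightarrow> bool" where
  "is_root_c S R r \<longleftrightarrow> r \<in> S \<and> (\<forall>a\<in>S. descendant_c R a r)"

definition simple_c :: "('a multiset \<times> 'a) set \<Rightarrow> bool" where
  "simple_c R \<longleftrightarrow> (\<forall>m a x. (m, a) \<in> R \<longrightarrow> count m x \<le> 1)"

definition dendroidal_c :: "'a set \<Rightarrow> ('a multiset \<times> 'a) set \<Rightarrow> bool" where
  "dendroidal_c S R \<longleftrightarrow>
     bposet_c S R \<and> finite R \<and> simple_c R \<and> (\<exists>r. is_root_c S R r)
   \<and> (\<forall>a\<in>S. \<not> leaf_c R a \<longrightarrow> has_children_c R a)"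

definition graft_c :: "('a multiset \<times> 'a) set \<Rightarrow> ('a multiset \<times> 'a) set \<Rightarrow> 'a
    \<Rightarrow> ('a multiset \<times> 'a) set" where
  "graft_c RA RB y = RA \<union> RB \<union>
     {(a + b, x) | a b x. (b, y) \<in> RB \<and> (a + {#y#}, x) \<in> RA}"

end

theory Submission
  imports Defs
begin

text \<open>
  The key observation is that transitivity of a broad poset is equivalent to closure under
  one-letter substitution (\<open>p u q \<le> x\<close> and \<open>v \<le> u\<close> give \<open>p v q \<le> x\<close>).  For \<open>A \<circ> B\<close> such a
  substitution happens either at a letter of \<open>B\<close>, where it is a substitution in \<open>B\<close> (possibly inside
  the grafted word), or at a letter of \<open>A\<close> outside \<open>B\<close>, where it is a substitution in \<open>A\<close> followed
  by a grafting at \<open>y\<close>.  Antisymmetry and simplicity reduce to those of \<open>A\<close> and \<open>B\<close>, the root of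
  \<open>A\<close> remains a root, and children of an element outside \<open>B\<close> are its children in \<open>A\<close>, the
  factorisation of a grafted word being obtained by grafting into the block containing \<open>y\<close>.
  The universal property holds among all broad posets: a grafted word is mapped to a composite
  in the target, which exists by transitivity there.
\<close>

section \<open>Planar broad posets\<close>

lemma distinct_split_unique:
  assumes "distinct (p @ u # q)" and "p @ u # q = p' @ u # q'"
  shows "p = p' \<and> q = q'"
proof -
  have "u \<notin> set p" "u \<notin> set q" using assms(1) by auto
  from append_Cons_eq_iff[OF this] assms(2) show ?thesis by blast
qed

lemma append_eq_block_cases:
  assumes "p @ u # q = a1 @ c @ a2" and "u \<notin> set c"
  shows "(\<exists>r. a1 = p @ u # r \<and> q = r @ c @ a2) \<or> (\<exists>r. a2 = r @ u # q \<and> p = a1 @ c @ r)"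
proof -
  from assms(1) obtain us where
    "p = a1 @ us \<and> us @ u # q = c @ a2 \<or> p @ us = a1 \<and> u # q = us @ c @ a2"
    by (auto simp: append_eq_append_conv2)
  then show ?thesis
  proof
    assume h: "p = a1 @ us \<and> us @ u # q = c @ a2"
    then obtain vs where "us = c @ vs \<and> vs @ u # q = a2 \<or> us @ vs = c \<and> u # q = vs @ a2"
      by (auto simp: append_eq_append_conv2)
    then show ?thesis using h assms(2) by (cases vs) auto
  next
    assume "p @ us = a1 \<and> u # q = us @ c @ a2"
    then show ?thesis using assms(2) by (cases us; cases c) auto
  qed
qed

lemma concat_eq_split:
  assumes "concat ass = p @ u # q" and "distinct (p @ u # q)"
  obtains j p' q' where "j < length ass" "ass ! j = p' @ u # q'"
    "p = concat (take j ass) @ p'" "q = q' @ concat (drop (Suc j) ass)"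
proof -
  have "u \<in> set (concat ass)" using assms(1) by simp
  then obtain xs where xs: "xs \<in> set ass" "u \<in> set xs" by auto
  then obtain j where "j < length ass" "ass ! j = xs" unfolding in_set_conv_nth by blast
  with xs(2) have j: "j < length ass" "u \<in> set (ass ! j)" by simp_all
  then obtain p' q' where pq: "ass ! j = p' @ u # q'" by (meson split_list)
  have "concat ass = concat (take j ass) @ ass ! j @ concat (drop (Suc j) ass)"
    by (subst id_take_nth_drop[OF j(1)]) simp
  then have "p @ u # q = (concat (take j ass) @ p') @ u # (q' @ concat (drop (Suc j) ass))"
    using pq assms(1) by (simp only: append.assoc append_Cons append_Nil)
  from distinct_split_unique[OF assms(2) this]
  have "p = concat (take j ass) @ p'" "q = q' @ concat (drop (Suc j) ass)" by simp_all
  with j(1) pq show thesis by (rule that)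
qed

lemma bposet_nc_facts:
  assumes "bposet_nc S R"
  shows bposet_nc_carrier: "(as, a) \<in> R \<Longrightarrow> set as \<subseteq> S \<and> a \<in> S"
    and bposet_nc_refl: "a \<in> S \<Longrightarrow> ([a], a) \<in> R"
    and bposet_nc_antisym: "([a], b) \<in> R \<Longrightarrow> ([b], a) \<in> R \<Longrightarrow> a = b"
  using assms unfolding bposet_nc_def by auto

text \<open>Transitivity specialised to one letter: if \<open>v \<le> u\<close> then \<open>u\<close> may be replaced by \<open>v\<close> in any
  word below \<open>x\<close> (all other letters are refined by themselves).\<close>
lemma bposet_nc_subst:
  assumes bp: "bposet_nc S R" and w: "(p @ u # q, x) \<in> R" and v: "(v, u) \<in> R"
  shows "(p @ v @ q, x) \<in> R"
proof -
  have trans: "\<And>as a bss. (as, a) \<in> R \<Longrightarrow> length bss = length as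
      \<Longrightarrow> \<forall>i<length as. (bss ! i, as ! i) \<in> R \<Longrightarrow> (concat bss, a) \<in> R"
    using bp unfolding bposet_nc_def by blast
  have pq: "set p \<subseteq> S" "set q \<subseteq> S" using bposet_nc_carrier[OF bp w] by auto
  define bss where "bss = map (\<lambda>z. [z]) p @ [v] @ map (\<lambda>z. [z]) q"
  have refines: "\<forall>i<length (p @ u # q). (bss ! i, (p @ u # q) ! i) \<in> R"
  proof (intro allI impI)
    fix i assume i: "i < length (p @ u # q)"
    consider "i < length p" | "i = length p" | "length p < i" by linarith
    then show "(bss ! i, (p @ u # q) ! i) \<in> R"
    proof cases
      case 1
      then have "p ! i \<in> S" using pq(1) nth_mem by blast
      moreover have "(p @ u # q) ! i = p ! i" "bss ! i = [p ! i]"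
        using 1 by (simp_all add: bss_def nth_append)
      ultimately show ?thesis using bposet_nc_refl[OF bp] by simp
    next
      case 2
      then show ?thesis using v by (simp add: bss_def nth_append)
    next
      case 3
      then obtain k where "i = Suc (length p + k)" using less_imp_Suc_add by blast
      then have k: "i = length p + Suc k" by simp
      then have kq: "k < length q" using i by simp
      then have "q ! k \<in> S" using pq(2) nth_mem by blast
      moreover have "(p @ u # q) ! i = q ! k" "bss ! i = [q ! k]"
        unfolding k bss_def using kq by (simp_all add: nth_append)
      ultimately show ?thesis using bposet_nc_refl[OF bp] by simp
    qed
  qed
  have "length bss = length (p @ u # q)" "concat bss = p @ v @ q"
    by (simp_all add: bss_def concat_map_singleton)
  with trans[OF w _ refines] show ?thesis by simp
qed

text \<open>Conversely, closure under one-letter substitution already yields full transitivity: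
  substitute the refinements \<open>bss ! i\<close> one position at a time.\<close>
lemma trans_from_subst_nc:
  assumes subst: "\<And>p u q x v. (p @ u # q, x) \<in> R \<Longrightarrow> (v, u) \<in> R \<Longrightarrow> (p @ v @ q, x) \<in> R"
    and as: "(as, a) \<in> R" and len: "length bss = length as"
    and refine: "\<forall>i<length as. (bss ! i, as ! i) \<in> R"
  shows "(concat bss, a) \<in> R"
proof -
  have "(concat (take k bss) @ drop k as, a) \<in> R" if "k \<le> length as" for k
    using that
  proof (induction k)
    case 0
    then show ?case using as by simp
  next
    case (Suc k)
    then have k: "k < length as" by simp
    have "(concat (take k bss) @ drop k as, a) \<in> R" using Suc.IH k by simp
    then have "(concat (take k bss) @ as ! k # drop (Suc k) as, a) \<in> R"
      using k by (simp add: Cons_nth_drop_Suc)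
    from subst[OF this refine[rule_format, OF k]]
    have "(concat (take k bss) @ bss ! k @ drop (Suc k) as, a) \<in> R" .
    then show ?case using k len by (simp add: take_Suc_conv_app_nth)
  qed
  from this[of "length as"] show ?thesis using len by simp
qed

lemma simple_nc_self:
  assumes bp: "bposet_nc S R" and sp: "simple_nc R" and w: "(p @ b # q, b) \<in> R"
  shows "p = [] \<and> q = []"
proof -
  have "(p @ (p @ b # q) @ q, b) \<in> R" using bposet_nc_subst[OF bp w w] .
  then have "distinct (p @ (p @ b # q) @ q)" using sp unfolding simple_nc_def by blast
  then show ?thesis by auto
qed

lemma simple_nc_no_cycle:
  assumes bp: "bposet_nc S R" and sp: "simple_nc R"
    and w1: "(w1, b) \<in> R" "a \<in> set w1" and w2: "(w2, a) \<in> R" "b \<in> set w2"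
  shows "a = b"
proof -
  obtain p1 q1 where p1: "w1 = p1 @ a # q1" using w1(2) by (meson split_list)
  obtain p2 q2 where p2: "w2 = p2 @ b # q2" using w2(2) by (meson split_list)
  have "(p1 @ w2 @ q1, b) \<in> R" using bposet_nc_subst[OF bp _ w2(1)] w1(1) p1 by blast
  then have "((p1 @ p2) @ b # (q2 @ q1), b) \<in> R" using p2 by simp
  then have "p1 @ p2 = [] \<and> q2 @ q1 = []" by (rule simple_nc_self[OF bp sp])
  then have "([a], b) \<in> R" "([b], a) \<in> R" using p1 p2 w1(1) w2(1) by auto
  then show ?thesis by (rule bposet_nc_antisym[OF bp])
qed

lemma ext_le_nc_mono: "R \<subseteq> R' \<Longrightarrow> ext_le_nc R b m \<Longrightarrow> ext_le_nc R' b m"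
  unfolding ext_le_nc_def by blast

locale nc_grafting =
  fixes SA :: "'a set" and RA :: "('a list \<times> 'a) set"
    and SB :: "'a set" and RB :: "('a list \<times> 'a) set" and y :: 'a
  assumes dendroidal_A: "dendroidal_nc SA RA"
    and dendroidal_B: "dendroidal_nc SB RB"
    and overlap: "SA \<inter> SB = {y}"
    and leaf_y: "leaf_nc RA y"
    and root_y: "is_root_nc SB RB y"
begin

abbreviation G :: "('a list \<times> 'a) set" where
  "G \<equiv> graft_nc RA RB y"

lemma bposet_A: "bposet_nc SA RA" and bposet_B: "bposet_nc SB RB"
  and simple_A: "simple_nc RA" and simple_B: "simple_nc RB"
  using dendroidal_A dendroidal_B unfolding dendroidal_nc_def by auto

lemmas carrier_A = bposet_nc_carrier[OF bposet_A]
  and carrier_B = bposet_nc_carrier[OF bposet_B]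
  and refl_A = bposet_nc_refl[OF bposet_A]
  and refl_B = bposet_nc_refl[OF bposet_B]
  and subst_A = bposet_nc_subst[OF bposet_A]
  and subst_B = bposet_nc_subst[OF bposet_B]

lemma distinct_A: "(w, x) \<in> RA \<Longrightarrow> distinct w"
  and distinct_B: "(w, x) \<in> RB \<Longrightarrow> distinct w"
  using simple_A simple_B unfolding simple_nc_def by blast+

lemma y_in_A: "y \<in> SA" and y_in_B: "y \<in> SB"
  using overlap by auto

lemma in_A_and_B: "x \<in> SA \<Longrightarrow> x \<in> SB \<Longrightarrow> x = y"
  using overlap by blast

lemma below_y_in_A: "(w, y) \<in> RA \<Longrightarrow> w = [y]"
  using leaf_y unfolding leaf_nc_def hat_nc_def by blast

lemma graft_A: "(w, x) \<in> RA \<Longrightarrow> (w, x) \<in> G"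
  and graft_B: "(w, x) \<in> RB \<Longrightarrow> (w, x) \<in> G"
  unfolding graft_nc_def by blast+

lemma graft_at_y: "(c, y) \<in> RB \<Longrightarrow> (a1 @ y # a2, x) \<in> RA \<Longrightarrow> (a1 @ c @ a2, x) \<in> G"
  unfolding graft_nc_def by force

lemma graft_cases:
  assumes "(z, x) \<in> G"
  obtains (A) "(z, x) \<in> RA" | (B) "(z, x) \<in> RB"
    | (grafted) a1 c a2 where "z = a1 @ c @ a2" "(c, y) \<in> RB" "(a1 @ y # a2, x) \<in> RA"
  using assms unfolding graft_nc_def by auto

lemma graft_below_B:
  assumes z: "(z, x) \<in> G" and x: "x \<in> SB"
  shows "(z, x) \<in> RB"
  using z
proof (cases rule: graft_cases)
  case A
  then have "x = y" using carrier_A x in_A_and_B by blast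
  with A have "z = [y]" using below_y_in_A by blast
  then show ?thesis using \<open>x = y\<close> refl_B y_in_B by simp
next
  case (grafted a1 c a2)
  then have "x = y" using carrier_A x in_A_and_B by blast
  with grafted(3) have "a1 @ y # a2 = [y]" using below_y_in_A by blast
  then have "a1 = [] \<and> a2 = []" by (cases a1) auto
  then show ?thesis using grafted(1,2) \<open>x = y\<close> by simp
qed

lemma graft_below_A:
  assumes "(z, x) \<in> G" and "x \<notin> SB"
  obtains (A) "(z, x) \<in> RA"
    | (grafted) a1 c a2 where "z = a1 @ c @ a2" "(c, y) \<in> RB" "(a1 @ y # a2, x) \<in> RA"
  using assms carrier_B by (cases rule: graft_cases) blast+

lemma graft_carrier:
  assumes "(z, x) \<in> G"
  shows "set z \<subseteq> SA \<union> SB \<and> x \<in> SA \<union> SB"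
  using assms
proof (cases rule: graft_cases)
  case (grafted a1 c a2)
  then show ?thesis using carrier_A[OF grafted(3)] carrier_B[OF grafted(2)] by auto
qed (use carrier_A carrier_B in blast)+

text \<open>Grafted words have no repetitions: a word below \<open>y\<close> lies in \<open>B\<close>, the rest of the word in
  \<open>A - {y}\<close>.\<close>
lemma graft_distinct:
  assumes "(z, x) \<in> G"
  shows "distinct z"
  using assms
proof (cases rule: graft_cases)
  case (grafted a1 c a2)
  have "distinct (a1 @ y # a2)" using distinct_A grafted(3) by blast
  moreover have "distinct c" "set c \<subseteq> SB" using distinct_B carrier_B grafted(2) by blast+
  moreover have "set a1 \<union> set a2 \<subseteq> SA - {y}"
    using carrier_A[OF grafted(3)] calculation(1) by auto
  ultimately show ?thesis using grafted(1) overlap by auto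
qed (use distinct_A distinct_B in blast)+

lemma subst_at_B_vertex:
  assumes w: "(p @ u # q, x) \<in> G" and v: "(v, u) \<in> RB"
  shows "(p @ v @ q, x) \<in> G"
  using w
proof (cases rule: graft_cases)
  case A
  have "u \<in> SA" "u \<in> SB" using carrier_A[OF A] carrier_B[OF v] by auto
  then have "u = y" by (rule in_A_and_B)
  then show ?thesis using graft_at_y v A by blast
next
  case B
  then show ?thesis using subst_B v graft_B by blast
next
  case (grafted a1 c a2)
  have D: "distinct (p @ u # q)" using graft_distinct w by blast
  show ?thesis
  proof (cases "u \<in> set c")
    case True
    then obtain c1 c2 where c: "c = c1 @ u # c2" by (meson split_list)
    have "p @ u # q = (a1 @ c1) @ u # (c2 @ a2)" using grafted(1) c by simp
    from distinct_split_unique[OF D this] have pq: "p = a1 @ c1" "q = c2 @ a2" by simp_all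
    have "(c1 @ v @ c2, y) \<in> RB" using subst_B grafted(2) v c by blast
    from graft_at_y[OF this grafted(3)] show ?thesis using pq by simp
  next
    case False
    have "u \<in> SB" using carrier_B v by blast
    moreover have "distinct (a1 @ y # a2)" using distinct_A grafted(3) by blast
    moreover from append_eq_block_cases[OF grafted(1) False]
    have "u \<in> set a1 \<or> u \<in> set a2" by auto
    ultimately show ?thesis using carrier_A[OF grafted(3)] in_A_and_B by auto
  qed
qed

lemma subst_at_A_vertex:
  assumes w: "(p @ u # q, x) \<in> G" and u: "u \<notin> SB" and v: "(v, u) \<in> RA"
  shows "(p @ v @ q, x) \<in> G"
  using w
proof (cases rule: graft_cases)
  case A
  then show ?thesis using subst_A v graft_A by blast
next
  case B
  then show ?thesis using carrier_B[OF B] u by simp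
next
  case (grafted a1 c a2)
  have "u \<notin> set c" using carrier_B[OF grafted(2)] u by blast
  from append_eq_block_cases[OF grafted(1) this] show ?thesis
  proof
    assume "\<exists>r. a1 = p @ u # r \<and> q = r @ c @ a2"
    then obtain r where r: "a1 = p @ u # r" "q = r @ c @ a2" by blast
    have "(p @ u # (r @ y # a2), x) \<in> RA" using grafted(3) r(1) by simp
    from subst_A[OF this v] have "((p @ v @ r) @ y # a2, x) \<in> RA" by simp
    from graft_at_y[OF grafted(2) this] show ?thesis using r(2) by simp
  next
    assume "\<exists>r. a2 = r @ u # q \<and> p = a1 @ c @ r"
    then obtain r where r: "a2 = r @ u # q" "p = a1 @ c @ r" by blast
    have "((a1 @ y # r) @ u # q, x) \<in> RA" using grafted(3) r(1) by simp
    from subst_A[OF this v] have "(a1 @ y # (r @ v @ q), x) \<in> RA" by simp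
    from graft_at_y[OF grafted(2) this] show ?thesis using r(2) by simp
  qed
qed

text \<open>A substitution at a letter outside
  \<open>B\<close> by a grafted word is a substitution in \<open>A\<close> followed by one at \<open>y\<close> in \<open>B\<close>.\<close>
lemma graft_subst:
  assumes w: "(p @ u # q, x) \<in> G" and v: "(v, u) \<in> G"
  shows "(p @ v @ q, x) \<in> G"
proof (cases "u \<in> SB")
  case True
  then show ?thesis using subst_at_B_vertex[OF w] graft_below_B[OF v] by blast
next
  case False
  from v False show ?thesis
  proof (cases rule: graft_below_A)
    case A
    then show ?thesis using subst_at_A_vertex[OF w False] by blast
  next
    case (grafted b1 d b2)
    from subst_at_A_vertex[OF w False grafted(3)]
    have "((p @ b1) @ y # (b2 @ q), x) \<in> G" by simp
    from subst_at_B_vertex[OF this grafted(2)] show ?thesis using grafted(1) by simp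
  qed
qed

lemma graft_trans:
  "(as, a) \<in> G \<Longrightarrow> length bss = length as \<Longrightarrow> \<forall>i<length as. (bss ! i, as ! i) \<in> G
    \<Longrightarrow> (concat bss, a) \<in> G"
  by (rule trans_from_subst_nc[where R = G, OF graft_subst])

lemma unary_outside_B:
  assumes ab: "([a], b) \<in> G" and "b \<notin> SB" and a: "a \<notin> SB"
  shows "\<exists>w. (w, b) \<in> RA \<and> a \<in> set w"
  using ab \<open>b \<notin> SB\<close>
proof (cases rule: graft_below_A)
  case (grafted a1 c a2)
  have "a \<in> set (a1 @ c @ a2)" unfolding grafted(1)[symmetric] by simp
  moreover have "a \<notin> set c" using carrier_B[OF grafted(2)] a by blast
  ultimately show ?thesis using grafted(3) by auto
qed auto

text \<open>Antisymmetry: inside \<open>B\<close> it is that of \<open>B\<close>, outside \<open>B\<close> it reduces to the absence of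
  2-cycles in the simple broad poset \<open>A\<close>.\<close>
lemma graft_antisym:
  assumes ab: "([a], b) \<in> G" and ba: "([b], a) \<in> G"
  shows "a = b"
proof (cases "a \<in> SB \<or> b \<in> SB")
  case in_B: True
  text \<open>Then both letters lie in \<open>B\<close>, where both relations already hold.\<close>
  have "([a], b) \<in> RB \<and> ([b], a) \<in> RB"
  proof (cases "b \<in> SB")
    case True
    then have "([a], b) \<in> RB" by (rule graft_below_B[OF ab])
    then have "a \<in> SB" using carrier_B by fastforce
    then show ?thesis using \<open>([a], b) \<in> RB\<close> graft_below_B[OF ba] by blast
  next
    case False
    then have "([b], a) \<in> RB" using in_B graft_below_B[OF ba] by blast
    then show ?thesis using False carrier_B by fastforce
  qed
  then show ?thesis using bposet_nc_antisym[OF bposet_B] by blast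
next
  case False
  then obtain w1 w2 where "(w1, b) \<in> RA" "a \<in> set w1" "(w2, a) \<in> RA" "b \<in> set w2"
    using unary_outside_B ab ba by blast
  then show ?thesis by (rule simple_nc_no_cycle[OF bposet_A simple_A])
qed

theorem graft_bposet: "bposet_nc (SA \<union> SB) G"
  unfolding bposet_nc_def
proof (intro conjI allI impI)
  show "G \<subseteq> lists (SA \<union> SB) \<times> (SA \<union> SB)" using graft_carrier by auto
  show "\<forall>a\<in>SA \<union> SB. ([a], a) \<in> G" using refl_A refl_B graft_A graft_B by blast
qed (use graft_trans graft_antisym in blast)+

text \<open>Finiteness: every grafted relation arises from a relation of \<open>B\<close>, one of \<open>A\<close> and a position.\<close>
lemma graft_finite: "finite G"
proof -
  have fin: "finite RA" "finite RB"
    using dendroidal_A dendroidal_B unfolding dendroidal_nc_def by auto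
  define grafts where "grafts = (\<Union>(c, r) \<in> RB. \<Union>(w, x) \<in> RA.
      (\<lambda>i. (take i w @ c @ drop (Suc i) w, x)) ` {..<length w})"
  have "finite grafts" using fin unfolding grafts_def by auto
  moreover have "G \<subseteq> RA \<union> RB \<union> grafts"
  proof (rule subrelI)
    fix z x assume "(z, x) \<in> G"
    then show "(z, x) \<in> RA \<union> RB \<union> grafts"
    proof (cases rule: graft_cases)
      case (grafted a1 c a2)
      let ?w = "a1 @ y # a2"
      have "(z, x) = (take (length a1) ?w @ c @ drop (Suc (length a1)) ?w, x)"
        using grafted(1) by simp
      then have "(z, x) \<in> (\<lambda>i. (take i ?w @ c @ drop (Suc i) ?w, x)) ` {..<length ?w}"
        by (rule image_eqI) simp
      then show ?thesis using grafted(2,3) unfolding grafts_def by blast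
    qed auto
  qed
  ultimately show ?thesis using fin by (meson finite_Un finite_subset)
qed

lemma graft_simple: "simple_nc G"
  unfolding simple_nc_def using graft_distinct by blast

text \<open>The root of \<open>A\<close> is a root of \<open>A \<circ> B\<close>: elements of \<open>B\<close> are reached through \<open>y\<close>.\<close>
lemma graft_root: "is_root_nc (SA \<union> SB) G r" if r: "is_root_nc SA RA r"
  unfolding is_root_nc_def
proof (intro conjI ballI)
  show "r \<in> SA \<union> SB" using r unfolding is_root_nc_def by blast
  fix a assume "a \<in> SA \<union> SB"
  then consider "a \<in> SA" | "a \<in> SB" by blast
  then show "descendant_nc G a r"
  proof cases
    case 1
    then show ?thesis using r graft_A unfolding is_root_nc_def descendant_nc_def by blast
  next
    case 2
    then obtain c where c: "(c, y) \<in> RB" "a \<in> set c"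
      using root_y unfolding is_root_nc_def descendant_nc_def by blast
    obtain w where w: "(w, r) \<in> RA" "y \<in> set w"
      using r y_in_A unfolding is_root_nc_def descendant_nc_def by blast
    obtain a1 a2 where "w = a1 @ y # a2" using w(2) by (meson split_list)
    then have "(a1 @ c @ a2, r) \<in> G" using graft_at_y c(1) w(1) by blast
    then show ?thesis using c(2) unfolding descendant_nc_def by fastforce
  qed
qed

lemma hat_B: "a \<in> SB \<Longrightarrow> hat_nc G a = hat_nc RB a"
  unfolding hat_nc_def using graft_below_B graft_B by blast

lemma hat_outside_B:
  assumes a: "a \<notin> SB" and b: "b \<in> hat_nc G a"
  obtains (A) "b \<in> hat_nc RA a"
    | (grafted) a1 c a2 where "b = a1 @ c @ a2" "(c, y) \<in> RB" "a1 @ y # a2 \<in> hat_nc RA a"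
proof -
  have "a \<noteq> y" using a y_in_B by blast
  from b have ba: "(b, a) \<in> G" "b \<noteq> [a]" unfolding hat_nc_def by auto
  from ba(1) a show thesis
  proof (cases rule: graft_below_A)
    case A
    then show thesis using that(1) ba(2) unfolding hat_nc_def by blast
  next
    case (grafted a1 c a2)
    have "a1 @ y # a2 \<noteq> [a]" using \<open>a \<noteq> y\<close> by (cases a1) auto
    then show thesis using that(2) grafted unfolding hat_nc_def by blast
  qed
qed

text \<open>Grafting a word \<open>c \<le> y\<close> into a factorisation of \<open>a1 y a2\<close> through the children \<open>m\<close>:
  the block of the factorisation containing \<open>y\<close> absorbs \<open>c\<close>.\<close>
lemma ext_le_graft:
  assumes le: "ext_le_nc RA (a1 @ y # a2) m" and D: "distinct (a1 @ y # a2)"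
    and c: "(c, y) \<in> RB"
  shows "ext_le_nc G (a1 @ c @ a2) m"
proof -
  obtain ass where ass: "length ass = length m" "concat ass = a1 @ y # a2"
    "\<forall>i<length m. (ass ! i, m ! i) \<in> RA"
    using le unfolding ext_le_nc_def by auto
  obtain j p q where j: "j < length ass" "ass ! j = p @ y # q"
    and pq: "a1 = concat (take j ass) @ p" "a2 = q @ concat (drop (Suc j) ass)"
    by (rule concat_eq_split[OF ass(2) D])
  define ass' where "ass' = ass[j := p @ c @ q]"
  have "concat ass' = a1 @ c @ a2"
    using j(1) pq by (simp add: ass'_def upd_conv_take_nth_drop)
  moreover have "length ass' = length m" using ass(1) by (simp add: ass'_def)
  moreover have "\<forall>i<length m. (ass' ! i, m ! i) \<in> G"
  proof (intro allI impI)
    fix i assume i: "i < length m"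
    show "(ass' ! i, m ! i) \<in> G"
    proof (cases "i = j")
      case True
      have "(p @ y # q, m ! j) \<in> RA" using ass(3) j ass(1) by auto
      then show ?thesis using graft_at_y[OF c] True j(1) by (simp add: ass'_def)
    next
      case False
      then show ?thesis using ass(3) i graft_A by (simp add: ass'_def)
    qed
  qed
  ultimately show ?thesis unfolding ext_le_nc_def by metis
qed

text \<open>Every non-leaf of \<open>A \<circ> B\<close> has children: inside \<open>B\<close> they are its children in \<open>B\<close>,
  outside \<open>B\<close> its children in \<open>A\<close>.\<close>
lemma graft_children:
  assumes a: "a \<in> SA \<union> SB" and not_leaf: "\<not> leaf_nc G a"
  shows "has_children_nc G a"
proof (cases "a \<in> SB")
  case True
  then have "\<not> leaf_nc RB a" using not_leaf hat_B unfolding leaf_nc_def by simp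
  then have "has_children_nc RB a" using dendroidal_B True unfolding dendroidal_nc_def by blast
  moreover have "RB \<subseteq> G" using graft_B by auto
  ultimately show ?thesis
    unfolding has_children_nc_def hat_B[OF True] using ext_le_nc_mono by blast
next
  case False
  obtain b where "b \<in> hat_nc G a" using not_leaf unfolding leaf_nc_def by blast
  with False have "\<not> leaf_nc RA a"
    unfolding leaf_nc_def by (cases rule: hat_outside_B) auto
  then obtain m where m: "m \<in> hat_nc RA a" "\<forall>b\<in>hat_nc RA a. ext_le_nc RA b m"
    using dendroidal_A a False unfolding dendroidal_nc_def has_children_nc_def by blast
  have "m \<in> hat_nc G a" using m(1) graft_A unfolding hat_nc_def by blast
  moreover have "ext_le_nc G b m" if b: "b \<in> hat_nc G a" for b
    using False b
  proof (cases rule: hat_outside_B)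
    case A
    moreover have "RA \<subseteq> G" using graft_A by auto
    ultimately show ?thesis using m(2) ext_le_nc_mono by blast
  next
    case (grafted a1 c a2)
    have "distinct (a1 @ y # a2)" using distinct_A grafted(3) unfolding hat_nc_def by blast
    from ext_le_graft[OF m(2)[rule_format, OF grafted(3)] this grafted(2)]
    show ?thesis using grafted(1) by simp
  qed
  ultimately show ?thesis unfolding has_children_nc_def by blast
qed

theorem graft_dendroidal: "dendroidal_nc (SA \<union> SB) G"
proof -
  obtain r where "is_root_nc SA RA r" using dendroidal_A unfolding dendroidal_nc_def by blast
  then show ?thesis unfolding dendroidal_nc_def
    using graft_bposet graft_finite graft_simple graft_root graft_children by blast
qed

lemma mono_A: "mono_nc SA RA (SA \<union> SB) G id"
  and mono_B: "mono_nc SB RB (SA \<union> SB) G id"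
  unfolding mono_nc_def using graft_A graft_B by auto

theorem graft_factorization:
  assumes C: "bposet_nc SC RC" and f: "mono_nc SA RA SC RC f" and g: "mono_nc SB RB SC RC g"
    and fg: "f y = g y"
  shows "\<exists>h. mono_nc (SA \<union> SB) G SC RC h \<and> (\<forall>a\<in>SA. h a = f a) \<and> (\<forall>b\<in>SB. h b = g b)"
proof -
  define h where "h x = (if x \<in> SA then f x else g x)" for x
  have hA: "\<forall>a\<in>SA. h a = f a" and hB: "\<forall>b\<in>SB. h b = g b"
    using overlap fg by (auto simp: h_def)
  have "(map h z, h x) \<in> RC" if zx: "(z, x) \<in> G" for z x
    using zx
  proof (cases rule: graft_cases)
    case A
    then have "map h z = map f z" "h x = f x" using carrier_A[OF A] hA by auto
    then show ?thesis using f A unfolding mono_nc_def by metis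
  next
    case B
    then have "map h z = map g z" "h x = g x" using carrier_B[OF B] hB by auto
    then show ?thesis using g B unfolding mono_nc_def by metis
  next
    case (grafted a1 c a2)
    have hf: "map h a1 = map f a1" "map h a2 = map f a2" "h x = f x"
      using carrier_A[OF grafted(3)] hA by auto
    have hg: "map h c = map g c" using carrier_B[OF grafted(2)] hB by auto
    have "(map f a1 @ f y # map f a2, f x) \<in> RC"
      using f grafted(3) unfolding mono_nc_def by fastforce
    moreover have "(map g c, f y) \<in> RC" using g grafted(2) fg unfolding mono_nc_def by fastforce
    ultimately have "(map f a1 @ map g c @ map f a2, f x) \<in> RC" by (rule bposet_nc_subst[OF C])
    then show ?thesis unfolding grafted(1) map_append hf hg .
  qed
  moreover have "h x \<in> SC" if "x \<in> SA \<union> SB" for x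
    using that f g hA hB unfolding mono_nc_def by auto
  ultimately show ?thesis unfolding mono_nc_def using hA hB by blast
qed

corollary graft_pushout:
  assumes "dendroidal_nc SC RC" and "mono_nc SA RA SC RC f" and "mono_nc SB RB SC RC g"
    and "f y = g y"
  shows "\<exists>h. mono_nc (SA \<union> SB) G SC RC h \<and> (\<forall>a\<in>SA. h a = f a) \<and> (\<forall>b\<in>SB. h b = g b)
    \<and> (\<forall>h'. mono_nc (SA \<union> SB) G SC RC h' \<and> (\<forall>a\<in>SA. h' a = f a) \<and> (\<forall>b\<in>SB. h' b = g b)
          \<longrightarrow> (\<forall>x\<in>SA \<union> SB. h' x = h x))"
proof -
  have "bposet_nc SC RC" using assms(1) unfolding dendroidal_nc_def by blast
  from graft_factorization[OF this assms(2-4)] obtain h where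
    "mono_nc (SA \<union> SB) G SC RC h" "\<forall>a\<in>SA. h a = f a" "\<forall>b\<in>SB. h b = g b" by blast
  then show ?thesis by auto
qed

end

section \<open>Commutative broad posets\<close>

lemma bposet_c_facts:
  assumes "bposet_c S R"
  shows bposet_c_carrier: "(as, a) \<in> R \<Longrightarrow> set_mset as \<subseteq> S \<and> a \<in> S"
    and bposet_c_refl: "a \<in> S \<Longrightarrow> ({#a#}, a) \<in> R"
    and bposet_c_antisym: "({#a#}, b) \<in> R \<Longrightarrow> ({#b#}, a) \<in> R \<Longrightarrow> a = b"
  using assms unfolding bposet_c_def by blast+

lemma bposet_c_subst:
  assumes bp: "bposet_c S R" and w: "(p + {#u#}, x) \<in> R" and v: "(v, u) \<in> R"
  shows "(p + v, x) \<in> R"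
proof -
  have trans: "\<And>as a bss. (mset as, a) \<in> R \<Longrightarrow> length bss = length as
      \<Longrightarrow> \<forall>i<length as. (bss ! i, as ! i) \<in> R \<Longrightarrow> (sum_list bss, a) \<in> R"
    using bp unfolding bposet_c_def by blast
  obtain l where l: "mset l = p" using ex_mset by blast
  have lS: "set l \<subseteq> S" using bposet_c_carrier[OF bp w] l by auto
  define bss where "bss = v # map (\<lambda>z. {#z#}) l"
  have word: "(mset (u # l), x) \<in> R" using w l by (simp add: add.commute)
  have refines: "\<forall>i<length (u # l). (bss ! i, (u # l) ! i) \<in> R"
  proof (intro allI impI)
    fix i assume i: "i < length (u # l)"
    show "(bss ! i, (u # l) ! i) \<in> R"
    proof (cases i)
      case 0
      then show ?thesis using v by (simp add: bss_def)
    next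
      case (Suc k)
      then have "k < length l" using i by simp
      then have "l ! k \<in> S" using lS nth_mem by blast
      then show ?thesis using Suc \<open>k < length l\<close> bposet_c_refl[OF bp] by (simp add: bss_def)
    qed
  qed
  have "length bss = length (u # l)" "sum_list bss = p + v"
    using l by (simp_all add: bss_def add.commute)
  with trans[OF word _ refines] show ?thesis by simp
qed

lemma trans_from_subst_c:
  assumes subst: "\<And>p u x v. (p + {#u#}, x) \<in> R \<Longrightarrow> (v, u) \<in> R \<Longrightarrow> (p + v, x) \<in> R"
    and as: "(mset as, a) \<in> R" and len: "length bss = length as"
    and refine: "\<forall>i<length as. (bss ! i, as ! i) \<in> R"
  shows "(sum_list bss, a) \<in> R"
proof -
  have "(sum_list (take k bss) + mset (drop k as), a) \<in> R" if "k \<le> length as" for k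
    using that
  proof (induction k)
    case 0
    then show ?case using as by simp
  next
    case (Suc k)
    then have k: "k < length as" by simp
    have "drop k as = as ! k # drop (Suc k) as" using k by (rule Cons_nth_drop_Suc[symmetric])
    then have "mset (drop k as) = mset (drop (Suc k) as) + {#as ! k#}" by simp
    moreover have "(sum_list (take k bss) + mset (drop k as), a) \<in> R" using Suc.IH k by simp
    ultimately have "((sum_list (take k bss) + mset (drop (Suc k) as)) + {#as ! k#}, a) \<in> R"
      by (simp only: add.assoc)
    from subst[OF this refine[rule_format, OF k]]
    have "((sum_list (take k bss) + mset (drop (Suc k) as)) + bss ! k, a) \<in> R" .
    then show ?case using k len by (simp add: take_Suc_conv_app_nth ac_simps)
  qed
  from this[of "length as"] show ?thesis using len by simp
qed

lemma simple_c_self: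
  assumes bp: "bposet_c S R" and sp: "simple_c R" and w: "(p + {#b#}, b) \<in> R"
  shows "p = {#}"
proof -
  have "(p + (p + {#b#}), b) \<in> R" using bposet_c_subst[OF bp w w] .
  then have count: "count (p + (p + {#b#})) x \<le> 1" for x
    using sp unfolding simple_c_def by blast
  have "count p x = 0" for x using count[of x] by (simp split: if_splits)
  then show ?thesis by (simp add: multiset_eq_iff)
qed

lemma simple_c_no_cycle:
  assumes bp: "bposet_c S R" and sp: "simple_c R"
    and w1: "(w1, b) \<in> R" "a \<in># w1" and w2: "(w2, a) \<in> R" "b \<in># w2"
  shows "a = b"
proof -
  define p1 where "p1 = w1 - {#a#}"
  define p2 where "p2 = w2 - {#b#}"
  have w1': "w1 = p1 + {#a#}" and w2': "w2 = p2 + {#b#}"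
    using w1(2) w2(2) by (simp_all add: p1_def p2_def)
  have "(p1 + w2, b) \<in> R" using bposet_c_subst[OF bp _ w2(1)] w1(1) w1' by blast
  then have "((p1 + p2) + {#b#}, b) \<in> R" using w2' by (simp add: add.assoc)
  then have "p1 + p2 = {#}" by (rule simple_c_self[OF bp sp])
  then have "({#a#}, b) \<in> R" "({#b#}, a) \<in> R" using w1' w2' w1(1) w2(1) by auto
  then show ?thesis by (rule bposet_c_antisym[OF bp])
qed

lemma ext_le_c_mono: "R \<subseteq> R' \<Longrightarrow> ext_le_c R b m \<Longrightarrow> ext_le_c R' b m"
  unfolding ext_le_c_def by blast

lemma sum_list_update:
  fixes xs :: "'b :: comm_monoid_add list"
  assumes "j < length xs"
  shows "sum_list (xs[j := v]) + xs ! j = sum_list xs + v"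
proof -
  have "sum_list xs = sum_list (take j xs) + xs ! j + sum_list (drop (Suc j) xs)"
    by (subst id_take_nth_drop[OF assms]) (simp add: add.assoc)
  then show ?thesis using assms by (simp add: upd_conv_take_nth_drop ac_simps)
qed

locale c_grafting =
  fixes SA :: "'a set" and RA :: "('a multiset \<times> 'a) set"
    and SB :: "'a set" and RB :: "('a multiset \<times> 'a) set" and y :: 'a
  assumes dendroidal_A: "dendroidal_c SA RA"
    and dendroidal_B: "dendroidal_c SB RB"
    and overlap: "SA \<inter> SB = {y}"
    and leaf_y: "leaf_c RA y"
    and root_y: "is_root_c SB RB y"
begin

abbreviation G :: "('a multiset \<times> 'a) set" where
  "G \<equiv> graft_c RA RB y"

lemma bposet_A: "bposet_c SA RA" and bposet_B: "bposet_c SB RB"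
  and simple_A: "simple_c RA" and simple_B: "simple_c RB"
  using dendroidal_A dendroidal_B unfolding dendroidal_c_def by auto

lemmas carrier_A = bposet_c_carrier[OF bposet_A]
  and carrier_B = bposet_c_carrier[OF bposet_B]
  and refl_A = bposet_c_refl[OF bposet_A]
  and refl_B = bposet_c_refl[OF bposet_B]
  and subst_A = bposet_c_subst[OF bposet_A]
  and subst_B = bposet_c_subst[OF bposet_B]

lemma count_A: "(w, x) \<in> RA \<Longrightarrow> count w u \<le> 1"
  and count_B: "(w, x) \<in> RB \<Longrightarrow> count w u \<le> 1"
  using simple_A simple_B unfolding simple_c_def by blast+

lemma y_in_A: "y \<in> SA" and y_in_B: "y \<in> SB"
  using overlap by auto

lemma in_A_and_B: "x \<in> SA \<Longrightarrow> x \<in> SB \<Longrightarrow> x = y"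
  using overlap by blast

lemma below_y_in_A: "(w, y) \<in> RA \<Longrightarrow> w = {#y#}"
  using leaf_y unfolding leaf_c_def hat_c_def by blast

lemma y_once: "(a + {#y#}, x) \<in> RA \<Longrightarrow> y \<notin># a"
  using count_A[of "a + {#y#}" x y] by (auto simp: count_eq_zero_iff[symmetric])

lemma graft_A: "(w, x) \<in> RA \<Longrightarrow> (w, x) \<in> G"
  and graft_B: "(w, x) \<in> RB \<Longrightarrow> (w, x) \<in> G"
  unfolding graft_c_def by blast+

lemma graft_at_y: "(c, y) \<in> RB \<Longrightarrow> (a + {#y#}, x) \<in> RA \<Longrightarrow> (a + c, x) \<in> G"
  unfolding graft_c_def by blast

lemma graft_cases:
  assumes "(z, x) \<in> G"
  obtains (A) "(z, x) \<in> RA" | (B) "(z, x) \<in> RB"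
    | (grafted) a c where "z = a + c" "(c, y) \<in> RB" "(a + {#y#}, x) \<in> RA"
  using assms unfolding graft_c_def by blast

lemma graft_below_B:
  assumes z: "(z, x) \<in> G" and x: "x \<in> SB"
  shows "(z, x) \<in> RB"
  using z
proof (cases rule: graft_cases)
  case A
  then have "x = y" using carrier_A x in_A_and_B by blast
  with A have "z = {#y#}" using below_y_in_A by blast
  then show ?thesis using \<open>x = y\<close> refl_B y_in_B by simp
next
  case (grafted a c)
  then have "x = y" using carrier_A x in_A_and_B by blast
  with grafted(3) have "a + {#y#} = {#y#}" using below_y_in_A by blast
  then show ?thesis using grafted(1,2) \<open>x = y\<close> by simp
qed

lemma graft_below_A:
  assumes "(z, x) \<in> G" and "x \<notin> SB"
  obtains (A) "(z, x) \<in> RA"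
    | (grafted) a c where "z = a + c" "(c, y) \<in> RB" "(a + {#y#}, x) \<in> RA"
  using assms carrier_B by (cases rule: graft_cases) blast+

lemma graft_carrier:
  assumes "(z, x) \<in> G"
  shows "set_mset z \<subseteq> SA \<union> SB \<and> x \<in> SA \<union> SB"
  using assms
proof (cases rule: graft_cases)
  case (grafted a c)
  then show ?thesis using carrier_A[OF grafted(3)] carrier_B[OF grafted(2)] by auto
qed (use carrier_A carrier_B in blast)+

text \<open>Simplicity of \<open>A \<circ> B\<close>: a letter of a grafted word occurs either in the \<open>A\<close>-part or in the
  \<open>B\<close>-part, and at most once there.\<close>
lemma graft_count:
  assumes "(z, x) \<in> G"
  shows "count z u \<le> 1"
  using assms
proof (cases rule: graft_cases)
  case (grafted a c)
  show ?thesis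
  proof (cases "u \<in># a")
    case True
    then have "u \<in> SA" "u \<noteq> y" using carrier_A[OF grafted(3)] y_once[OF grafted(3)] by auto
    then have "u \<notin># c" using carrier_B[OF grafted(2)] in_A_and_B by blast
    then show ?thesis using count_A[OF grafted(3), of u] grafted(1)
      by (auto simp: count_eq_zero_iff[symmetric] split: if_splits)
  next
    case False
    then show ?thesis using count_B[OF grafted(2), of u] grafted(1)
      by (simp add: count_eq_zero_iff[symmetric])
  qed
qed (use count_A count_B in blast)+

lemma subst_at_B_vertex:
  assumes w: "(p + {#u#}, x) \<in> G" and v: "(v, u) \<in> RB"
  shows "(p + v, x) \<in> G"
  using w
proof (cases rule: graft_cases)
  case A
  have "u \<in> SA" "u \<in> SB" using carrier_A[OF A] carrier_B[OF v] by auto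
  then have "u = y" by (rule in_A_and_B)
  then show ?thesis using graft_at_y v A by blast
next
  case B
  then show ?thesis using subst_B v graft_B by blast
next
  case (grafted a c)
  show ?thesis
  proof (cases "u \<in># c")
    case True
    define c' where "c' = c - {#u#}"
    have c: "c = c' + {#u#}" using True by (simp add: c'_def)
    then have p: "p = a + c'" using grafted(1) by (simp add: add.assoc[symmetric])
    have "(c' + v, y) \<in> RB" using subst_B grafted(2) v c by blast
    from graft_at_y[OF this grafted(3)] show ?thesis using p by (simp add: add.assoc)
  next
    case False
    then have "u \<in># a" using grafted(1) by (metis add_mset_add_single union_iff union_single_eq_member)
    moreover have "u \<in> SB" using carrier_B v by blast
    ultimately show ?thesis
      using carrier_A[OF grafted(3)] in_A_and_B y_once[OF grafted(3)] by auto
  qed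
qed

lemma subst_at_A_vertex:
  assumes w: "(p + {#u#}, x) \<in> G" and u: "u \<notin> SB" and v: "(v, u) \<in> RA"
  shows "(p + v, x) \<in> G"
  using w
proof (cases rule: graft_cases)
  case A
  then show ?thesis using subst_A v graft_A by blast
next
  case B
  then show ?thesis using carrier_B[OF B] u by simp
next
  case (grafted a c)
  have "u \<notin># c" using carrier_B[OF grafted(2)] u by blast
  then have "u \<in># a" using grafted(1) by (metis add_mset_add_single union_iff union_single_eq_member)
  define a' where "a' = a - {#u#}"
  have a: "a = a' + {#u#}" using \<open>u \<in># a\<close> by (simp add: a'_def)
  then have p: "p = a' + c" using grafted(1) by (simp add: ac_simps)
  have "((a' + {#y#}) + {#u#}, x) \<in> RA" using grafted(3) a by (simp add: ac_simps)
  from subst_A[OF this v] have "((a' + v) + {#y#}, x) \<in> RA" by (simp add: ac_simps)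
  from graft_at_y[OF grafted(2) this] show ?thesis using p by (simp add: ac_simps)
qed

lemma graft_subst:
  assumes w: "(p + {#u#}, x) \<in> G" and v: "(v, u) \<in> G"
  shows "(p + v, x) \<in> G"
proof (cases "u \<in> SB")
  case True
  then show ?thesis using subst_at_B_vertex[OF w] graft_below_B[OF v] by blast
next
  case False
  from v False show ?thesis
  proof (cases rule: graft_below_A)
    case A
    then show ?thesis using subst_at_A_vertex[OF w False] by blast
  next
    case (grafted b d)
    from subst_at_A_vertex[OF w False grafted(3)]
    have "((p + b) + {#y#}, x) \<in> G" by (simp add: ac_simps)
    from subst_at_B_vertex[OF this grafted(2)] show ?thesis using grafted(1) by (simp add: ac_simps)
  qed
qed

lemma graft_trans:
  "(mset as, a) \<in> G \<Longrightarrow> length bss = length as \<Longrightarrow> \<forall>i<length as. (bss ! i, as ! i) \<in> G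
    \<Longrightarrow> (sum_list bss, a) \<in> G"
  by (rule trans_from_subst_c[where R = G, OF graft_subst])

lemma unary_outside_B:
  assumes ab: "({#a#}, b) \<in> G" and "b \<notin> SB" and a: "a \<notin> SB"
  shows "\<exists>w. (w, b) \<in> RA \<and> a \<in># w"
  using ab \<open>b \<notin> SB\<close>
proof (cases rule: graft_below_A)
  case (grafted a1 c)
  have "a \<in># a1 + c" unfolding grafted(1)[symmetric] by simp
  moreover have "a \<notin># c" using carrier_B[OF grafted(2)] a by blast
  ultimately show ?thesis using grafted(3) by auto
qed auto

lemma graft_antisym:
  assumes ab: "({#a#}, b) \<in> G" and ba: "({#b#}, a) \<in> G"
  shows "a = b"
proof (cases "a \<in> SB \<or> b \<in> SB")
  case in_B: True
  have "({#a#}, b) \<in> RB \<and> ({#b#}, a) \<in> RB"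
  proof (cases "b \<in> SB")
    case True
    then have "({#a#}, b) \<in> RB" by (rule graft_below_B[OF ab])
    then have "a \<in> SB" using carrier_B by fastforce
    then show ?thesis using \<open>({#a#}, b) \<in> RB\<close> graft_below_B[OF ba] by blast
  next
    case False
    then have "({#b#}, a) \<in> RB" using in_B graft_below_B[OF ba] by blast
    then show ?thesis using False carrier_B by fastforce
  qed
  then show ?thesis using bposet_c_antisym[OF bposet_B] by blast
next
  case False
  then obtain w1 w2 where "(w1, b) \<in> RA" "a \<in># w1" "(w2, a) \<in> RA" "b \<in># w2"
    using unary_outside_B ab ba by blast
  then show ?thesis by (rule simple_c_no_cycle[OF bposet_A simple_A])
qed

theorem graft_bposet: "bposet_c (SA \<union> SB) G"
  unfolding bposet_c_def
proof (intro conjI allI impI)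
  show "\<forall>a\<in>SA \<union> SB. ({#a#}, a) \<in> G" using refl_A refl_B graft_A graft_B by blast
qed (use graft_carrier graft_trans graft_antisym in blast)+

text \<open>Finiteness: a grafted relation is determined by a relation of \<open>B\<close> and one of \<open>A\<close>.\<close>
lemma graft_finite: "finite G"
proof -
  have fin: "finite RA" "finite RB"
    using dendroidal_A dendroidal_B unfolding dendroidal_c_def by auto
  define grafts where "grafts = (\<lambda>((c, r), (w, x)). (w - {#y#} + c, x)) ` (RB \<times> RA)"
  have "finite grafts" using fin unfolding grafts_def by auto
  moreover have "G \<subseteq> RA \<union> RB \<union> grafts"
  proof (rule subrelI)
    fix z x assume "(z, x) \<in> G"
    then show "(z, x) \<in> RA \<union> RB \<union> grafts"
    proof (cases rule: graft_cases)
      case (grafted a c)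
      have "(z, x) = (\<lambda>((c, r), (w, x)). (w - {#y#} + c, x)) ((c, y), (a + {#y#}, x))"
        using grafted(1) by simp
      moreover have "((c, y), (a + {#y#}, x)) \<in> RB \<times> RA" using grafted(2,3) by blast
      ultimately show ?thesis unfolding grafts_def by blast
    qed auto
  qed
  ultimately show ?thesis using fin by (meson finite_Un finite_subset)
qed

lemma graft_simple: "simple_c G"
  unfolding simple_c_def using graft_count by blast

lemma graft_root: "is_root_c (SA \<union> SB) G r" if r: "is_root_c SA RA r"
  unfolding is_root_c_def
proof (intro conjI ballI)
  show "r \<in> SA \<union> SB" using r unfolding is_root_c_def by blast
  fix a assume "a \<in> SA \<union> SB"
  then consider "a \<in> SA" | "a \<in> SB" by blast
  then show "descendant_c G a r"
  proof cases
    case 1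
    then show ?thesis using r graft_A unfolding is_root_c_def descendant_c_def by blast
  next
    case 2
    then obtain c where c: "(c, y) \<in> RB" "a \<in># c"
      using root_y unfolding is_root_c_def descendant_c_def by blast
    obtain w where w: "(w, r) \<in> RA" "y \<in># w"
      using r y_in_A unfolding is_root_c_def descendant_c_def by blast
    then have "((w - {#y#}) + {#y#}, r) \<in> RA" by simp
    then have "((w - {#y#}) + c, r) \<in> G" by (rule graft_at_y[OF c(1)])
    then show ?thesis using c(2) unfolding descendant_c_def by fastforce
  qed
qed

lemma hat_B: "a \<in> SB \<Longrightarrow> hat_c G a = hat_c RB a"
  unfolding hat_c_def using graft_below_B graft_B by blast

lemma hat_outside_B:
  assumes a: "a \<notin> SB" and b: "b \<in> hat_c G a"
  obtains (A) "b \<in> hat_c RA a"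
    | (grafted) a1 c where "b = a1 + c" "(c, y) \<in> RB" "a1 + {#y#} \<in> hat_c RA a"
proof -
  have "a \<noteq> y" using a y_in_B by blast
  from b have ba: "(b, a) \<in> G" "b \<noteq> {#a#}" unfolding hat_c_def by auto
  from ba(1) a show thesis
  proof (cases rule: graft_below_A)
    case A
    then show thesis using that(1) ba(2) unfolding hat_c_def by blast
  next
    case (grafted a1 c)
    have "a1 + {#y#} \<noteq> {#a#}" using \<open>a \<noteq> y\<close> by (metis add_mset_add_single single_eq_add_mset)
    then show thesis using that(2) grafted unfolding hat_c_def by blast
  qed
qed

text \<open>The summand of a factorisation of \<open>a1 + y\<close> that contains \<open>y\<close> absorbs a word \<open>c \<le> y\<close>.\<close>
lemma ext_le_graft:
  assumes le: "ext_le_c RA (a1 + {#y#}) m" and c: "(c, y) \<in> RB"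
  shows "ext_le_c G (a1 + c) m"
proof -
  obtain bs ms where bm: "mset bs = m" "length ms = length bs" "sum_list ms = a1 + {#y#}"
    "\<forall>i<length bs. (ms ! i, bs ! i) \<in> RA"
    using le unfolding ext_le_c_def by metis
  have "y \<in># sum_list ms" using bm(3) by simp
  then obtain j where j: "j < length ms" "y \<in># ms ! j"
    by (auto simp: in_set_conv_nth)
  define q where "q = ms ! j - {#y#}"
  have q: "ms ! j = q + {#y#}" using j(2) by (simp add: q_def)
  define ms' where "ms' = ms[j := q + c]"
  have "sum_list ms' + ms ! j = sum_list ms + (q + c)"
    unfolding ms'_def by (rule sum_list_update[OF j(1)])
  then have "sum_list ms' = a1 + c" using q bm(3) by (simp add: ac_simps)
  moreover have "length ms' = length bs" using bm(2) by (simp add: ms'_def)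
  moreover have "\<forall>i<length bs. (ms' ! i, bs ! i) \<in> G"
  proof (intro allI impI)
    fix i assume i: "i < length bs"
    show "(ms' ! i, bs ! i) \<in> G"
    proof (cases "i = j")
      case True
      have "(q + {#y#}, bs ! j) \<in> RA" using bm(2,4) j(1) q by auto
      then show ?thesis using graft_at_y[OF c] True j(1) by (simp add: ms'_def)
    next
      case False
      then show ?thesis using bm(4) i graft_A by (simp add: ms'_def)
    qed
  qed
  ultimately show ?thesis unfolding ext_le_c_def using bm(1) by metis
qed

lemma graft_children:
  assumes a: "a \<in> SA \<union> SB" and not_leaf: "\<not> leaf_c G a"
  shows "has_children_c G a"
proof (cases "a \<in> SB")
  case True
  then have "\<not> leaf_c RB a" using not_leaf hat_B unfolding leaf_c_def by simp
  then have "has_children_c RB a" using dendroidal_B True unfolding dendroidal_c_def by blast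
  moreover have "RB \<subseteq> G" using graft_B by auto
  ultimately show ?thesis
    unfolding has_children_c_def hat_B[OF True] using ext_le_c_mono by blast
next
  case False
  obtain b where "b \<in> hat_c G a" using not_leaf unfolding leaf_c_def by blast
  with False have "\<not> leaf_c RA a"
    unfolding leaf_c_def by (cases rule: hat_outside_B) auto
  then obtain m where m: "m \<in> hat_c RA a" "\<forall>b\<in>hat_c RA a. ext_le_c RA b m"
    using dendroidal_A a False unfolding dendroidal_c_def has_children_c_def by blast
  have "m \<in> hat_c G a" using m(1) graft_A unfolding hat_c_def by blast
  moreover have "ext_le_c G b m" if b: "b \<in> hat_c G a" for b
    using False b
  proof (cases rule: hat_outside_B)
    case A
    moreover have "RA \<subseteq> G" using graft_A by auto
    ultimately show ?thesis using m(2) ext_le_c_mono by blast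
  next
    case (grafted a1 c)
    from ext_le_graft[OF m(2)[rule_format, OF grafted(3)] grafted(2)]
    show ?thesis using grafted(1) by simp
  qed
  ultimately show ?thesis unfolding has_children_c_def by blast
qed

theorem graft_dendroidal: "dendroidal_c (SA \<union> SB) G"
proof -
  obtain r where "is_root_c SA RA r" using dendroidal_A unfolding dendroidal_c_def by blast
  then show ?thesis unfolding dendroidal_c_def
    using graft_bposet graft_finite graft_simple graft_root graft_children by blast
qed

lemma mono_A: "mono_c SA RA (SA \<union> SB) G id"
  and mono_B: "mono_c SB RB (SA \<union> SB) G id"
  unfolding mono_c_def using graft_A graft_B by auto

theorem graft_factorization:
  assumes C: "bposet_c SC RC" and f: "mono_c SA RA SC RC f" and g: "mono_c SB RB SC RC g"
    and fg: "f y = g y"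
  shows "\<exists>h. mono_c (SA \<union> SB) G SC RC h \<and> (\<forall>a\<in>SA. h a = f a) \<and> (\<forall>b\<in>SB. h b = g b)"
proof -
  define h where "h x = (if x \<in> SA then f x else g x)" for x
  have hA: "\<forall>a\<in>SA. h a = f a" and hB: "\<forall>b\<in>SB. h b = g b"
    using overlap fg by (auto simp: h_def)
  have "(image_mset h z, h x) \<in> RC" if zx: "(z, x) \<in> G" for z x
    using zx
  proof (cases rule: graft_cases)
    case A
    then have "image_mset h z = image_mset f z" "h x = f x"
      using carrier_A[OF A] hA by (auto intro: image_mset_cong)
    then show ?thesis using f A unfolding mono_c_def by metis
  next
    case B
    then have "image_mset h z = image_mset g z" "h x = g x"
      using carrier_B[OF B] hB by (auto intro: image_mset_cong)
    then show ?thesis using g B unfolding mono_c_def by metis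
  next
    case (grafted a c)
    have hf: "image_mset h a = image_mset f a" "h x = f x"
      using carrier_A[OF grafted(3)] hA by (auto intro: image_mset_cong)
    have hg: "image_mset h c = image_mset g c"
      using carrier_B[OF grafted(2)] hB by (auto intro: image_mset_cong)
    have "(image_mset f a + {#f y#}, f x) \<in> RC"
      using f grafted(3) unfolding mono_c_def by fastforce
    moreover have "(image_mset g c, f y) \<in> RC" using g grafted(2) fg unfolding mono_c_def by fastforce
    ultimately have "(image_mset f a + image_mset g c, f x) \<in> RC" by (rule bposet_c_subst[OF C])
    then show ?thesis unfolding grafted(1) image_mset_union hf hg .
  qed
  moreover have "h x \<in> SC" if "x \<in> SA \<union> SB" for x
    using that f g hA hB unfolding mono_c_def by auto
  ultimately show ?thesis unfolding mono_c_def using hA hB by blast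
qed

corollary graft_pushout:
  assumes "dendroidal_c SC RC" and "mono_c SA RA SC RC f" and "mono_c SB RB SC RC g"
    and "f y = g y"
  shows "\<exists>h. mono_c (SA \<union> SB) G SC RC h \<and> (\<forall>a\<in>SA. h a = f a) \<and> (\<forall>b\<in>SB. h b = g b)
    \<and> (\<forall>h'. mono_c (SA \<union> SB) G SC RC h' \<and> (\<forall>a\<in>SA. h' a = f a) \<and> (\<forall>b\<in>SB. h' b = g b)
          \<longrightarrow> (\<forall>x\<in>SA \<union> SB. h' x = h x))"
proof -
  have "bposet_c SC RC" using assms(1) unfolding dendroidal_c_def by blast
  from graft_factorization[OF this assms(2-4)] obtain h where
    "mono_c (SA \<union> SB) G SC RC h" "\<forall>a\<in>SA. h a = f a" "\<forall>b\<in>SB. h b = g b" by blast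
  then show ?thesis by auto
qed

end

theorem corollary5p1:
  shows
  "(\<forall>(SA :: 'a set) RA SB RB y.
      dendroidal_nc SA RA \<and> dendroidal_nc SB RB \<and> SA \<inter> SB = {y}
      \<and> leaf_nc RA y \<and> is_root_nc SB RB y \<longrightarrow>
        dendroidal_nc (SA \<union> SB) (graft_nc RA RB y)
      \<and> mono_nc SA RA (SA \<union> SB) (graft_nc RA RB y) id
      \<and> mono_nc SB RB (SA \<union> SB) (graft_nc RA RB y) id
      \<and> (\<forall>(SC :: 'c set) RC f g.
           dendroidal_nc SC RC \<and> mono_nc SA RA SC RC f \<and> mono_nc SB RB SC RC g
           \<and> f y = g y \<longrightarrow>
             (\<exists>h. mono_nc (SA \<union> SB) (graft_nc RA RB y) SC RC h
                  \<and> (\<forall>a\<in>SA. h a = f a) \<and> (\<forall>b\<in>SB. h b = g b)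
                  \<and> (\<forall>h'. mono_nc (SA \<union> SB) (graft_nc RA RB y) SC RC h'
                          \<and> (\<forall>a\<in>SA. h' a = f a) \<and> (\<forall>b\<in>SB. h' b = g b)
                          \<longrightarrow> (\<forall>x\<in>SA \<union> SB. h' x = h x)))))
 \<and> (\<forall>(SA :: 'a set) RA SB RB y.
      dendroidal_c SA RA \<and> dendroidal_c SB RB \<and> SA \<inter> SB = {y}
      \<and> leaf_c RA y \<and> is_root_c SB RB y \<longrightarrow>
        dendroidal_c (SA \<union> SB) (graft_c RA RB y)
      \<and> mono_c SA RA (SA \<union> SB) (graft_c RA RB y) id
      \<and> mono_c SB RB (SA \<union> SB) (graft_c RA RB y) id
      \<and> (\<forall>(SC :: 'c set) RC f g.
           dendroidal_c SC RC \<and> mono_c SA RA SC RC f \<and> mono_c SB RB SC RC g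
           \<and> f y = g y \<longrightarrow>
             (\<exists>h. mono_c (SA \<union> SB) (graft_c RA RB y) SC RC h
                  \<and> (\<forall>a\<in>SA. h a = f a) \<and> (\<forall>b\<in>SB. h b = g b)
                  \<and> (\<forall>h'. mono_c (SA \<union> SB) (graft_c RA RB y) SC RC h'
                          \<and> (\<forall>a\<in>SA. h' a = f a) \<and> (\<forall>b\<in>SB. h' b = g b)
                          \<longrightarrow> (\<forall>x\<in>SA \<union> SB. h' x = h x)))))"
  by (intro conjI allI impI; elim conjE;
      rule nc_grafting.graft_dendroidal nc_grafting.mono_A nc_grafting.mono_B
        nc_grafting.graft_pushout c_grafting.graft_dendroidal c_grafting.mono_A
        c_grafting.mono_B c_grafting.graft_pushout;
      (rule nc_grafting.intro c_grafting.intro)?; assumption)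

end
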